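(* Let $\alpha$ be a reduced operation sequence. If a push operation of $\alpha$ is fixed, then every pop operation of $\alpha$ corresponding to it is also fixed.
   Context: Operation sequences: $\sigma[a]$ ($a\ge1$) denotes pushing the top $a$ elements of the input stack, as a block with relative order unchanged, onto the top of a working stack; $\tau[b]$ ($b\ge1$) denotes moving the top $b$ elements of the working stack, as a block with relative order unchanged, onto the top of an output stack; $\sigma=\sigma[1]$, $\tau=\tau[1]$. A well-formed operation sequence is a word $\alpha=\alpha_1\cdots\alpha_m$ in these symbols such that in every prefix the total push size is at least the total pop size, with equality for the whole word; its size $n$ is the total push size. Acting on an input stack containing $1,\dots,n$ with $1$ on top, it produces the permutation read from the final output stack top to bottom. Two well-formed sequences are equivalent if they have the same size and produce the same permutation. $\alpha$ is reduced if every consecutive pair $\alpha_i\alpha_{i+1}$ with $\alpha_i$ a push and $\alpha_{i+1}$ a pop equals $\sigma[1]\tau[1]$. The vertices of $\alpha$ are $v_0=(0,0)$ and $v_i=v_{i-1}+(a,a)$ if $\alpha_i=\sigma[a]$, $v_i=v_{i-1}+(b,-b)$ if $\alpha_i=\tau[b]$. The support of a push (resp. pop) is the set of elements it places on (resp. removes from) the working stack when $\alpha$ acts on input $1,\dots,n$. A push and a pop correspond if their supports intersect. An operation $\alpha_i$ of a reduced sequence $\alpha$ is fixed if for every reduced sequence $\beta=\beta_1\cdots\beta_{m'}$ equivalent to $\alpha$, with vertices $w_0,\dots,w_{m'}$, there is $j$ with $w_{j-1}=v_{i-1}$ and $w_j=v_i$. *)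

theory Defs
  imports Main
begin

datatype op = Push nat | Pop nat

fun is_push :: "op \<Rightarrow> bool" where
  "is_push (Push a) = True" | "is_push (Pop b) = False"

fun is_pop :: "op \<Rightarrow> bool" where
  "is_pop (Push a) = False" | "is_pop (Pop b) = True"

fun push_amt :: "op \<Rightarrow> nat" where
  "push_amt (Push a) = a" | "push_amt (Pop b) = 0"

fun pop_amt :: "op \<Rightarrow> nat" where
  "pop_amt (Push a) = 0" | "pop_amt (Pop b) = b"

fun op_amt :: "op \<Rightarrow> nat" where
  "op_amt (Push a) = a" | "op_amt (Pop b) = b"

definition seq_size :: "op list \<Rightarrow> nat" where
  "seq_size xs = sum_list (map push_amt xs)"

definition well_formed :: "op list \<Rightarrow> bool" where
  "well_formed xs \<longleftrightarrow>
     (\<forall>x \<in> set xs. op_amt x \<ge> 1) \<and>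
     (\<forall>k \<le> length xs. sum_list (map pop_amt (take k xs)) \<le> sum_list (map push_amt (take k xs))) \<and>
     sum_list (map pop_amt xs) = sum_list (map push_amt xs)"

text \<open>Configurations (input stack, working stack, output stack); lists are read top first.\<close>
type_synonym config = "nat list \<times> nat list \<times> nat list"

fun step :: "config \<Rightarrow> op \<Rightarrow> config" where
  "step (inp, wk, out) (Push a) = (drop a inp, take a inp @ wk, out)"
| "step (inp, wk, out) (Pop b) = (inp, drop b wk, take b wk @ out)"

definition init_config :: "nat \<Rightarrow> config" where
  "init_config n = ([1..<Suc n], [], [])"

definition config_at :: "op list \<Rightarrow> nat \<Rightarrow> config" where
  "config_at xs k = foldl step (init_config (seq_size xs)) (take k xs)"

definition result_perm :: "op list \<Rightarrow> nat list" where
  "result_perm xs = snd (snd (config_at xs (length xs)))"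

definition equivalent :: "op list \<Rightarrow> op list \<Rightarrow> bool" where
  "equivalent xs ys \<longleftrightarrow> well_formed xs \<and> well_formed ys \<and>
     seq_size xs = seq_size ys \<and> result_perm xs = result_perm ys"

definition reduced :: "op list \<Rightarrow> bool" where
  "reduced xs \<longleftrightarrow> (\<forall>i. Suc i < length xs \<longrightarrow> is_push (xs ! i) \<longrightarrow> is_pop (xs ! Suc i) \<longrightarrow>
      xs ! i = Push 1 \<and> xs ! Suc i = Pop 1)"

fun delta :: "op \<Rightarrow> int \<times> int" where
  "delta (Push a) = (int a, int a)"
| "delta (Pop b) = (int b, - int b)"

definition vertex :: "op list \<Rightarrow> nat \<Rightarrow> int \<times> int" where
  "vertex xs k = foldl (\<lambda>(p, q) x. (p + fst (delta x), q + snd (delta x))) (0, 0) (take k xs)"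

definition support :: "op list \<Rightarrow> nat \<Rightarrow> nat set" where
  "support xs i = (case config_at xs i of (inp, wk, out) \<Rightarrow>
     (case xs ! i of Push a \<Rightarrow> set (take a inp) | Pop b \<Rightarrow> set (take b wk)))"

definition corresponds :: "op list \<Rightarrow> nat \<Rightarrow> nat \<Rightarrow> bool" where
  "corresponds xs i j \<longleftrightarrow> is_push (xs ! i) \<and> is_pop (xs ! j) \<and> support xs i \<inter> support xs j \<noteq> {}"

definition fixed_op :: "op list \<Rightarrow> nat \<Rightarrow> bool" where
  "fixed_op xs i \<longleftrightarrow> (\<forall>ys. reduced ys \<longrightarrow> equivalent xs ys \<longrightarrow>
     (\<exists>j < length ys. vertex ys j = vertex xs i \<and> vertex ys (Suc j) = vertex xs (Suc i)))"

end

(*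
  Let beta be reduced and equivalent to alpha. Since push i is fixed, beta pushes the same
  block from the same vertex; let x be an element of the block, removed by pop j of alpha and
  by pop j' of beta. The configuration at a vertex is pinned down up to the working stack:
  the output is the suffix of the common permutation whose length is the number of popped
  elements. Moreover, whether an element lies above x in the working stack depends only on
  the block of x, so it is the same in both runs. As a pop removes a top segment of the
  working stack and outputs it in order, comparing the two runs shows that the pops of x
  start after the same number of popped elements, end after the same number of popped
  elements, and start after the same number of pushed elements: they are the same edge.
  Reducedness is needed for the end: the elements that one run pops in excess with x lie
  above x but are not yet pushed in the other run, and a reduced sequence must already have
  output an element at least as large, contradicting the common output before the pop.
*)

theory Submission
  imports Defs
begin

lemma sum_list_take_mono:
  fixes f :: "'a \<Rightarrow> nat"
  assumes "k \<le> k'"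
  shows "sum_list (map f (take k xs)) \<le> sum_list (map f (take k' xs))"
proof -
  have "take k' xs = take k xs @ take (k' - k) (drop k xs)"
    using take_add[of k "k' - k" xs] assms by simp
  then show ?thesis by simp
qed

lemma nth_in_set_drop_iff:
  assumes "distinct xs" and "p < length xs"
  shows "xs ! p \<in> set (drop d xs) \<longleftrightarrow> d \<le> p"
proof
  assume "xs ! p \<in> set (drop d xs)"
  then obtain q where "q < length xs - d" and "xs ! (d + q) = xs ! p"
    by (auto simp: in_set_conv_nth)
  with assms have "p = d + q" by (simp add: nth_eq_iff_index_eq)
  then show "d \<le> p" by simp
next
  assume "d \<le> p"
  with assms(2) show "xs ! p \<in> set (drop d xs)"
    using nth_mem[of "p - d" "drop d xs"] by simp
qed

definition pushed :: "op list \<Rightarrow> nat \<Rightarrow> nat" where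
  "pushed s k = sum_list (map push_amt (take k s))"

definition popped :: "op list \<Rightarrow> nat \<Rightarrow> nat" where
  "popped s k = sum_list (map pop_amt (take k s))"

lemma pushed_0 [simp]: "pushed s 0 = 0" and popped_0 [simp]: "popped s 0 = 0"
  unfolding pushed_def popped_def by simp_all

lemma pushed_Suc: "k < length s \<Longrightarrow> pushed s (Suc k) = pushed s k + push_amt (s ! k)"
  and popped_Suc: "k < length s \<Longrightarrow> popped s (Suc k) = popped s k + pop_amt (s ! k)"
  unfolding pushed_def popped_def by (simp_all add: take_Suc_conv_app_nth)

lemma pushed_mono: "k \<le> k' \<Longrightarrow> pushed s k \<le> pushed s k'"
  unfolding pushed_def by (rule sum_list_take_mono)

lemma pushed_beyond: "length s \<le> k \<Longrightarrow> pushed s k = seq_size s"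
  unfolding pushed_def seq_size_def by simp

lemma pushed_le_size: "pushed s k \<le> seq_size s"
  using pushed_mono[of k "max k (length s)" s] pushed_beyond[of s "max k (length s)"] by simp

lemma popped_le_pushed: "well_formed s \<Longrightarrow> popped s k \<le> pushed s k"
  unfolding well_formed_def pushed_def popped_def
  by (cases "k \<le> length s") auto

lemma popped_beyond: "well_formed s \<Longrightarrow> length s \<le> k \<Longrightarrow> popped s k = seq_size s"
  unfolding well_formed_def popped_def seq_size_def by simp

lemma popped_le_size: "well_formed s \<Longrightarrow> popped s k \<le> seq_size s"
  using popped_le_pushed pushed_le_size le_trans by blast

lemma push_at_if_pushed_less:
  assumes "pushed s k < pushed s (Suc k)"
  obtains a where "k < length s" and "s ! k = Push a"
proof -
  have "k < length s"
    using assms pushed_beyond[of s k] pushed_beyond[of s "Suc k"] by fastforce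
  with assms that show ?thesis by (cases "s ! k") (auto simp: pushed_Suc)
qed

lemma vertex_eq: "vertex s k = (int (pushed s k) + int (popped s k), int (pushed s k) - int (popped s k))"
proof -
  have "foldl (\<lambda>(p, q) x. (p + fst (delta x), q + snd (delta x))) (p0, q0) xs =
    (p0 + int (sum_list (map push_amt xs)) + int (sum_list (map pop_amt xs)),
     q0 + int (sum_list (map push_amt xs)) - int (sum_list (map pop_amt xs)))" for p0 q0 xs
  proof (induction xs arbitrary: p0 q0)
    case (Cons y ys)
    then show ?case by (cases y) (auto simp: algebra_simps)
  qed simp
  then show ?thesis unfolding vertex_def pushed_def popped_def by simp
qed

lemma vertex_eq_iff:
  "vertex s k = vertex t k' \<longleftrightarrow> pushed s k = pushed t k' \<and> popped s k = popped t k'"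
  unfolding vertex_eq by auto

definition push_index :: "op list \<Rightarrow> nat \<Rightarrow> nat" where
  "push_index s x = (LEAST k. x \<le> pushed s (Suc k))"

lemma push_index_eq:
  assumes "pushed s k < x" and "x \<le> pushed s (Suc k)"
  shows "push_index s x = k"
  unfolding push_index_def
proof (rule Least_equality)
  show "k \<le> m" if "x \<le> pushed s (Suc m)" for m
  proof (rule ccontr)
    assume "\<not> k \<le> m"
    then have "pushed s (Suc m) \<le> pushed s k"
      by (intro pushed_mono) simp
    with that assms(1) show False by simp
  qed
qed (use assms(2) in simp)

lemma push_index_bounds:
  assumes "1 \<le> x" and "x \<le> seq_size s"
  shows "pushed s (push_index s x) < x" and "x \<le> pushed s (Suc (push_index s x))"
proof -
  have "x \<le> pushed s (Suc (length s))"
    using assms pushed_beyond[of s "Suc (length s)"] by simp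
  then show upper: "x \<le> pushed s (Suc (push_index s x))"
    unfolding push_index_def by (rule LeastI)
  show "pushed s (push_index s x) < x"
  proof (cases "push_index s x")
    case (Suc m)
    then have "\<not> x \<le> pushed s (Suc m)"
      using not_less_Least[of m "\<lambda>k. x \<le> pushed s (Suc k)"] unfolding push_index_def by simp
    with Suc show ?thesis by simp
  qed (use assms in simp)
qed

lemma push_index_less_iff:
  assumes "1 \<le> x" and "x \<le> seq_size s"
  shows "push_index s x < k \<longleftrightarrow> x \<le> pushed s k"
  using push_index_bounds[OF assms] pushed_mono[of "Suc (push_index s x)" k s]
    pushed_mono[of k "push_index s x" s]
  by (cases "push_index s x < k") auto

text \<open>The order of the working stack, top first: every push puts its block, in increasing
  order, on top of all elements pushed before.\<close>
definition above :: "op list \<Rightarrow> nat \<Rightarrow> nat \<Rightarrow> bool" where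
  "above s u v \<longleftrightarrow> push_index s v < push_index s u \<or> (push_index s u = push_index s v \<and> u < v)"

lemma above_block_iff:
  assumes "pushed s k < x" and "x \<le> pushed s (Suc k)" and "1 \<le> y" and "y \<le> seq_size s"
  shows "above s y x \<longleftrightarrow> pushed s (Suc k) < y \<or> (pushed s k < y \<and> y < x)"
    and "above s x y \<longleftrightarrow> y \<le> pushed s k \<or> (x < y \<and> y \<le> pushed s (Suc k))"
proof -
  have "push_index s x = k"
    using assms(1,2) by (rule push_index_eq)
  moreover have "push_index s y < k \<longleftrightarrow> y \<le> pushed s k"
    and "push_index s y < Suc k \<longleftrightarrow> y \<le> pushed s (Suc k)"
    using push_index_less_iff[OF assms(3,4)] by auto
  ultimately show "above s y x \<longleftrightarrow> pushed s (Suc k) < y \<or> (pushed s k < y \<and> y < x)"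
    and "above s x y \<longleftrightarrow> y \<le> pushed s k \<or> (x < y \<and> y \<le> pushed s (Suc k))"
    using assms(1,2) unfolding above_def by auto
qed

definition input_at :: "op list \<Rightarrow> nat \<Rightarrow> nat list" where
  "input_at s k = fst (config_at s k)"

definition work_at :: "op list \<Rightarrow> nat \<Rightarrow> nat list" where
  "work_at s k = fst (snd (config_at s k))"

definition output_at :: "op list \<Rightarrow> nat \<Rightarrow> nat list" where
  "output_at s k = snd (snd (config_at s k))"

lemma config_at_eq: "config_at s k = (input_at s k, work_at s k, output_at s k)"
  unfolding input_at_def work_at_def output_at_def by simp

lemma config_at_Suc: "k < length s \<Longrightarrow> config_at s (Suc k) = step (config_at s k) (s ! k)"
  unfolding config_at_def by (simp add: take_Suc_conv_app_nth)

lemma config_at_beyond: "length s \<le> k \<Longrightarrow> config_at s k = config_at s (length s)"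
  unfolding config_at_def by simp

lemma result_perm_eq: "result_perm s = output_at s (length s)"
  unfolding result_perm_def output_at_def by simp

lemma step_at_Push:
  assumes "k < length s" and "s ! k = Push a"
  shows "input_at s (Suc k) = drop a (input_at s k)"
    and "work_at s (Suc k) = take a (input_at s k) @ work_at s k"
    and "output_at s (Suc k) = output_at s k"
  using config_at_Suc[OF assms(1)] assms(2) config_at_eq[of s k] config_at_eq[of s "Suc k"]
  by simp_all

lemma step_at_Pop:
  assumes "k < length s" and "s ! k = Pop b"
  shows "input_at s (Suc k) = input_at s k"
    and "work_at s (Suc k) = drop b (work_at s k)"
    and "output_at s (Suc k) = take b (work_at s k) @ output_at s k"
  using config_at_Suc[OF assms(1)] assms(2) config_at_eq[of s k] config_at_eq[of s "Suc k"]
  by simp_all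

definition run_invariant :: "op list \<Rightarrow> nat \<Rightarrow> bool" where
  "run_invariant s k \<longleftrightarrow>
     input_at s k = [Suc (pushed s k)..<Suc (seq_size s)] \<and>
     length (work_at s k) = pushed s k - popped s k \<and> length (output_at s k) = popped s k \<and>
     distinct (work_at s k @ output_at s k) \<and> set (work_at s k @ output_at s k) = {1..pushed s k} \<and>
     sorted_wrt (above s) (work_at s k)"

lemma run_invariant_Push:
  assumes wf: "well_formed s" and k: "k < length s" and push: "s ! k = Push a"
    and inv: "run_invariant s k"
  shows "run_invariant s (Suc k)"
proof -
  let ?P = "pushed s k" and ?n = "seq_size s" and ?w = "work_at s k" and ?out = "output_at s k"
  have P_Suc: "pushed s (Suc k) = ?P + a" and Q_Suc: "popped s (Suc k) = popped s k"
    using pushed_Suc[OF k] popped_Suc[OF k] push by simp_all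
  have "?P + a \<le> ?n"
    using pushed_le_size[of s "Suc k"] P_Suc by simp
  moreover have input: "input_at s k = [Suc ?P..<Suc ?n]"
    using inv unfolding run_invariant_def by simp
  ultimately have block: "take a (input_at s k) = [Suc ?P..<Suc ?P + a]"
    and rest: "drop a (input_at s k) = [Suc (?P + a)..<Suc ?n]"
    by (simp_all add: drop_upt del: upt_Suc)
  have old: "set ?w \<union> set ?out = {1..?P}" and "distinct (?w @ ?out)"
    using inv unfolding run_invariant_def by auto
  then have distinct: "distinct ([Suc ?P..<Suc ?P + a] @ ?w @ ?out)"
    by auto
  have index_block: "push_index s x = k" if "x \<in> set [Suc ?P..<Suc ?P + a]" for x
    using that P_Suc by (intro push_index_eq) auto
  have index_old: "push_index s y < k" if "y \<in> set ?w" for y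
  proof -
    have "y \<in> {1..?P}"
      using that old by blast
    then show ?thesis
      using push_index_less_iff[of y s k] pushed_le_size[of s k] by simp
  qed
  have "sorted_wrt (above s) [Suc ?P..<Suc ?P + a]"
    by (rule sorted_wrt_mono_rel[OF _ sorted_wrt_upt]) (auto simp: above_def index_block)
  then have sorted: "sorted_wrt (above s) ([Suc ?P..<Suc ?P + a] @ ?w)"
    using inv index_block index_old unfolding run_invariant_def
    by (auto simp: sorted_wrt_append above_def)
  show ?thesis
    unfolding run_invariant_def step_at_Push[OF k push] block rest P_Suc Q_Suc
    using inv distinct sorted old popped_le_pushed[OF wf, of k] unfolding run_invariant_def by auto
qed

lemma run_invariant_Pop:
  assumes wf: "well_formed s" and k: "k < length s" and pop: "s ! k = Pop b"
    and inv: "run_invariant s k"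
  shows "run_invariant s (Suc k)"
proof -
  let ?w = "work_at s k" and ?out = "output_at s k"
  have P_Suc: "pushed s (Suc k) = pushed s k" and Q_Suc: "popped s (Suc k) = popped s k + b"
    using pushed_Suc[OF k] popped_Suc[OF k] pop by simp_all
  have "popped s k + b \<le> pushed s k"
    using popped_le_pushed[OF wf, of "Suc k"] P_Suc Q_Suc by simp
  then have len: "b \<le> length ?w"
    using inv unfolding run_invariant_def by simp
  have "distinct ((take b ?w @ drop b ?w) @ ?out)"
    and "set ((take b ?w @ drop b ?w) @ ?out) = {1..pushed s k}"
    using inv unfolding run_invariant_def by simp_all
  then have "distinct (drop b ?w @ take b ?w @ ?out)"
    and "set (drop b ?w @ take b ?w @ ?out) = {1..pushed s k}"
    by (auto simp del: append_take_drop_id)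
  moreover have "sorted_wrt (above s) (drop b ?w)"
    using inv sorted_wrt_drop unfolding run_invariant_def by blast
  ultimately show ?thesis
    using inv len unfolding run_invariant_def step_at_Pop[OF k pop] P_Suc Q_Suc by simp
qed

lemma run_invariant:
  assumes wf: "well_formed s"
  shows "run_invariant s k"
proof -
  have "run_invariant s k" if "k \<le> length s" for k
    using that
  proof (induction k)
    case 0
    show ?case
      unfolding run_invariant_def input_at_def work_at_def output_at_def config_at_def
        init_config_def by simp
  next
    case (Suc k)
    then have "k < length s" and "run_invariant s k" by simp_all
    then show ?case
      using run_invariant_Push[OF wf] run_invariant_Pop[OF wf] by (cases "s ! k") blast+
  qed
  moreover have "run_invariant s k = run_invariant s (length s)" if "length s \<le> k"
    using that config_at_beyond[OF that] pushed_beyond[OF that] popped_beyond[OF wf that]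
      pushed_beyond[of s "length s"] popped_beyond[OF wf, of "length s"]
    unfolding run_invariant_def input_at_def work_at_def output_at_def by simp
  ultimately show ?thesis
    by (cases "k \<le> length s") simp_all
qed

lemma
  assumes "well_formed s"
  shows input_at_eq: "input_at s k = [Suc (pushed s k)..<Suc (seq_size s)]"
    and length_work_at: "length (work_at s k) = pushed s k - popped s k"
    and length_output_at: "length (output_at s k) = popped s k"
    and distinct_work_output: "distinct (work_at s k @ output_at s k)"
    and set_work_output: "set (work_at s k @ output_at s k) = {1..pushed s k}"
    and sorted_work_at: "sorted_wrt (above s) (work_at s k)"
  using run_invariant[OF assms] unfolding run_invariant_def by simp_all

lemma mem_work_at_iff:
  assumes "well_formed s"
  shows "e \<in> set (work_at s k) \<longleftrightarrow> 1 \<le> e \<and> e \<le> pushed s k \<and> e \<notin> set (output_at s k)"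
  using distinct_work_output[OF assms, of k] set_work_output[OF assms, of k] by auto

lemma output_at_bounds:
  assumes "well_formed s" and "e \<in> set (output_at s k)"
  shows "1 \<le> e" and "e \<le> pushed s k"
  using set_work_output[OF assms(1), of k] assms(2) by auto

lemma output_at_suffix:
  assumes "k \<le> k'"
  shows "\<exists>zs. output_at s k' = zs @ output_at s k"
  using assms
proof (induction k' rule: dec_induct)
  case (step m)
  then obtain zs where zs: "output_at s m = zs @ output_at s k" by blast
  show ?case
  proof (cases "m < length s")
    case True
    then show ?thesis
      using zs step_at_Push(3)[OF True] step_at_Pop(3)[OF True] by (cases "s ! m") auto
  next
    case False
    then have "output_at s (Suc m) = output_at s m"
      unfolding output_at_def using config_at_beyond[of s m] config_at_beyond[of s "Suc m"] by simp
    with zs show ?thesis by auto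
  qed
qed simp

lemma output_at_mono:
  assumes "k \<le> k'"
  shows "set (output_at s k) \<subseteq> set (output_at s k')"
proof -
  obtain zs where "output_at s k' = zs @ output_at s k"
    using output_at_suffix[OF assms] by blast
  then show ?thesis by simp
qed

lemma
  assumes "well_formed s"
  shows length_result_perm: "length (result_perm s) = seq_size s"
    and distinct_result_perm: "distinct (result_perm s)"
    and set_result_perm: "set (result_perm s) = {1..seq_size s}"
proof -
  have "popped s (length s) = seq_size s" and pushed: "pushed s (length s) = seq_size s"
    using popped_beyond[OF assms] pushed_beyond by simp_all
  then have "work_at s (length s) = []"
    using length_work_at[OF assms, of "length s"] by simp
  then show "length (result_perm s) = seq_size s"
    and "distinct (result_perm s)" and "set (result_perm s) = {1..seq_size s}"
    using length_output_at[OF assms, of "length s"] distinct_work_output[OF assms, of "length s"]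
      set_work_output[OF assms, of "length s"] \<open>popped s (length s) = seq_size s\<close> pushed
    unfolding result_perm_eq by simp_all
qed

lemma output_at_eq_drop:
  assumes wf: "well_formed s"
  shows "output_at s k = drop (seq_size s - popped s k) (result_perm s)"
proof -
  obtain zs where "result_perm s = zs @ output_at s k"
  proof (cases "k \<le> length s")
    case True
    then show ?thesis using that output_at_suffix[OF True] unfolding result_perm_eq by blast
  next
    case False
    then show ?thesis
      using that[of "[]"] config_at_beyond[of s k] unfolding result_perm_eq output_at_def by simp
  qed
  then show ?thesis
    using length_output_at[OF wf, of k] length_result_perm[OF wf] by simp
qed

lemma nth_result_perm_in_output_iff:
  assumes "well_formed s" and "p < seq_size s"
  shows "result_perm s ! p \<in> set (output_at s k) \<longleftrightarrow> seq_size s - popped s k \<le> p"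
  using nth_in_set_drop_iff[OF distinct_result_perm[OF assms(1)]] assms
  by (simp add: output_at_eq_drop length_result_perm)

lemma output_at_eq_if_popped_eq:
  assumes "well_formed s" and "well_formed t" and "result_perm s = result_perm t"
    and "seq_size s = seq_size t" and "popped s k = popped t k'"
  shows "output_at s k = output_at t k'"
  using assms by (simp add: output_at_eq_drop)

definition pops :: "op list \<Rightarrow> nat \<Rightarrow> nat \<Rightarrow> bool" where
  "pops s k e \<longleftrightarrow> k < length s \<and> e \<notin> set (output_at s k) \<and> e \<in> set (output_at s (Suc k))"

lemma pops_PopE:
  assumes "pops s k e"
  obtains b where "k < length s" and "s ! k = Pop b"
proof -
  have k: "k < length s"
    using assms unfolding pops_def by simp
  with assms that step_at_Push(3)[OF k] show ?thesis
    unfolding pops_def by (cases "s ! k") auto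
qed

lemma pops_Pop_iff:
  assumes wf: "well_formed s" and k: "k < length s" and pop: "s ! k = Pop b"
  shows "pops s k e \<longleftrightarrow> e \<in> set (take b (work_at s k))"
  using k distinct_work_output[OF wf, of k] in_set_takeD[of e b "work_at s k"]
  unfolding pops_def step_at_Pop(3)[OF k pop] by auto

lemma pushed_Suc_if_pops: "pops s k e \<Longrightarrow> pushed s (Suc k) = pushed s k"
  by (erule pops_PopE) (simp add: pushed_Suc)

lemma pops_bounds:
  assumes wf: "well_formed s" and "pops s k e"
  shows "1 \<le> e" and "e \<le> pushed s k"
  using assms(2) pushed_Suc_if_pops[OF assms(2)] output_at_bounds[OF wf, of e "Suc k"]
  unfolding pops_def by simp_all

lemma pops_in_output_iff:
  assumes "pops s k e"
  shows "e \<in> set (output_at s k') \<longleftrightarrow> k < k'"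
proof
  assume "e \<in> set (output_at s k')"
  then show "k < k'"
    using assms output_at_mono[of k' k s] unfolding pops_def by (cases "k < k'") auto
next
  assume "k < k'"
  then show "e \<in> set (output_at s k')"
    using assms output_at_mono[of "Suc k" k' s] unfolding pops_def by auto
qed

lemma pops_unique: "pops s k e \<Longrightarrow> pops s k' e \<Longrightarrow> k = k'"
  using pops_in_output_iff[of s k e "Suc k'"] pops_in_output_iff[of s k' e "Suc k"]
  unfolding pops_def by simp

lemma pops_before_if_in_output:
  assumes "e \<in> set (output_at s k)"
  shows "\<exists>k' < k. pops s k' e"
  using assms
proof (induction k)
  case 0
  then show ?case
    unfolding output_at_def config_at_def init_config_def by simp
next
  case (Suc k)
  show ?case
  proof (cases "e \<in> set (output_at s k)")
    case True
    with Suc.IH show ?thesis by (meson less_SucI)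
  next
    case False
    then have "k < length s"
      using Suc.prems config_at_beyond[of s k] config_at_beyond[of s "Suc k"]
      unfolding output_at_def by (cases "k < length s") auto
    with False Suc.prems show ?thesis
      unfolding pops_def by blast
  qed
qed

lemma pops_exists:
  assumes wf: "well_formed s" and "1 \<le> e" and "e \<le> seq_size s"
  obtains k where "pops s k e"
  using pops_before_if_in_output[of e s "length s"] assms set_result_perm[OF wf]
  unfolding result_perm_eq by auto

lemma mem_work_at_before_pop:
  assumes wf: "well_formed s" and "pops s j e" and "e \<le> pushed s k" and "k < j"
  shows "e \<in> set (work_at s k)"
  using mem_work_at_iff[OF wf] pops_bounds(1)[OF wf assms(2)] pops_in_output_iff[OF assms(2), of k]
    assms(3,4) by simp

lemma pops_nth_iff:
  assumes wf: "well_formed s" and p: "p < seq_size s"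
  shows "pops s k (result_perm s ! p) \<longleftrightarrow>
    k < length s \<and> seq_size s - popped s (Suc k) \<le> p \<and> p < seq_size s - popped s k"
  using nth_result_perm_in_output_iff[OF assms, of k]
    nth_result_perm_in_output_iff[OF assms, of "Suc k"]
  unfolding pops_def by auto

lemma pops_if_above:
  assumes wf: "well_formed s" and pops_v: "pops s k v" and u: "u \<in> set (work_at s k)"
    and "above s u v"
  shows "pops s k u"
proof -
  let ?w = "work_at s k"
  obtain b where k: "k < length s" and pop: "s ! k = Pop b"
    using pops_v by (rule pops_PopE)
  have "v \<in> set (take b ?w)"
    using pops_v pops_Pop_iff[OF wf k pop] by simp
  then obtain r where r: "r < b" "r < length ?w" "?w ! r = v"
    by (auto simp: in_set_conv_nth)
  obtain r' where r': "r' < length ?w" "?w ! r' = u"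
    using u by (auto simp: in_set_conv_nth)
  have "r' < r"
  proof (rule ccontr)
    assume "\<not> r' < r"
    then consider "r = r'" | "r < r'"
      by linarith
    then show False
    proof cases
      case 1
      with r r' \<open>above s u v\<close> show False
        unfolding above_def by auto
    next
      case 2
      then have "above s v u"
        using sorted_wrt_nth_less[OF sorted_work_at[OF wf, of k] 2 r'(1)] r(3) r'(2) by simp
      with \<open>above s u v\<close> show False
        unfolding above_def by auto
    qed
  qed
  with r r' have "u \<in> set (take b ?w)"
    using nth_mem[of r' "take b ?w"] by simp
  then show ?thesis
    using pops_Pop_iff[OF wf k pop] by simp
qed

lemma above_if_pops_nth_less:
  assumes wf: "well_formed s"
    and pops_p: "pops s k (result_perm s ! p)" and pops_q: "pops s k (result_perm s ! q)"
    and "p < q" and "q < seq_size s"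
  shows "above s (result_perm s ! p) (result_perm s ! q)"
proof -
  obtain b where k: "k < length s" and pop: "s ! k = Pop b"
    using pops_q by (rule pops_PopE)
  let ?\<pi> = "result_perm s" and ?n = "seq_size s" and ?seg = "take b (work_at s k)"
  define base where "base = ?n - popped s (Suc k)"
  have Q: "popped s (Suc k) = popped s k + b"
    using popped_Suc[OF k] pop by simp
  have range: "base \<le> p" "q < base + b"
    using pops_nth_iff[OF wf, of p k] pops_nth_iff[OF wf, of q k] pops_p pops_q \<open>p < q\<close>
      \<open>q < ?n\<close> popped_le_size[OF wf, of "Suc k"] Q
    unfolding base_def by auto
  have "b \<le> length (work_at s k)"
    using length_work_at[OF wf, of k] popped_le_pushed[OF wf, of "Suc k"] Q
      pushed_Suc[OF k] pop by simp
  then have "length ?seg = b"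
    by simp
  have seg_output: "?seg @ output_at s k = drop base ?\<pi>"
    using step_at_Pop(3)[OF k pop] output_at_eq_drop[OF wf, of "Suc k"] unfolding base_def by simp
  have seg: "?seg ! r = ?\<pi> ! (base + r)" if "r < b" for r
  proof -
    have "?seg ! r = (?seg @ output_at s k) ! r"
      using that \<open>length ?seg = b\<close> by (simp add: nth_append)
    also have "\<dots> = ?\<pi> ! (base + r)"
      unfolding seg_output using length_result_perm[OF wf] base_def by simp
    finally show ?thesis .
  qed
  have "sorted_wrt (above s) ?seg"
    using sorted_work_at[OF wf, of k] by (rule sorted_wrt_take)
  moreover have "p - base < q - base" and "q - base < length ?seg"
    using range \<open>p < q\<close> \<open>length ?seg = b\<close> by linarith+
  ultimately have "above s (?seg ! (p - base)) (?seg ! (q - base))"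
    by (rule sorted_wrt_nth_less)
  with seg range \<open>p < q\<close> show ?thesis by simp
qed

lemma reduced_unit_push_pop_between:
  assumes red: "reduced s" and "d < k" and k: "k < length s"
    and push: "is_push (s ! d)" and pop: "is_pop (s ! k)"
  obtains g where "d \<le> g" and "Suc g \<le> k" and "s ! g = Push 1" and "s ! Suc g = Pop 1"
proof -
  define f where "f = (LEAST f. d < f \<and> is_pop (s ! f))"
  have f: "d < f" "is_pop (s ! f)"
    using LeastI[of "\<lambda>f. d < f \<and> is_pop (s ! f)" k] assms unfolding f_def by auto
  have "f \<le> k"
    using Least_le[of "\<lambda>f. d < f \<and> is_pop (s ! f)" k] assms unfolding f_def by auto
  obtain g where g: "f = Suc g" "d \<le> g"
    using f(1) by (cases f) auto
  have "is_push (s ! g)"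
  proof (cases "g = d")
    case False
    then have "\<not> is_pop (s ! g)"
      using not_less_Least[of g "\<lambda>f. d < f \<and> is_pop (s ! f)"] g unfolding f_def by auto
    then show ?thesis by (cases "s ! g") simp_all
  qed (use push in simp)
  then have "s ! g = Push 1" and "s ! Suc g = Pop 1"
    using red f g \<open>f \<le> k\<close> k unfolding reduced_def by auto
  with g \<open>f \<le> k\<close> that show ?thesis by simp
qed

lemma pops_unit_push_pop:
  assumes wf: "well_formed s" and g: "Suc g < length s"
    and push: "s ! g = Push 1" and pop: "s ! Suc g = Pop 1"
  shows "pops s (Suc g) (pushed s (Suc g))"
proof -
  have g_len: "g < length s"
    using g by simp
  have P: "pushed s (Suc g) = Suc (pushed s g)"
    using pushed_Suc[OF g_len] push by simp
  then have "take 1 (input_at s g) = [pushed s (Suc g)]"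
    using input_at_eq[OF wf, of g] pushed_le_size[of s "Suc g"] by (simp add: upt_rec)
  then show ?thesis
    using pops_Pop_iff[OF wf g pop] step_at_Push(2)[OF g_len push] by simp
qed

lemma reduced_pops_two_after_pop:
  assumes wf: "well_formed s" and red: "reduced s"
    and pops_y: "pops s (Suc j) y" and pops_z: "pops s (Suc j) z" and "y \<noteq> z"
  shows "is_pop (s ! j)"
proof (rule ccontr)
  obtain b where j: "Suc j < length s" and pop: "s ! Suc j = Pop b"
    using pops_y by (rule pops_PopE)
  assume "\<not> is_pop (s ! j)"
  then have "s ! Suc j = Pop 1"
    using red j pop unfolding reduced_def by (cases "s ! j") auto
  then have "y \<in> set (take 1 (work_at s (Suc j)))" and "z \<in> set (take 1 (work_at s (Suc j)))"
    using pops_Pop_iff[OF wf j] pops_y pops_z by simp_all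
  with \<open>y \<noteq> z\<close> show False
    by (cases "work_at s (Suc j)") simp_all
qed

text \<open>By reducedness such a pop follows another pop, and between the push of y and that pop
  some unit push is popped at once; its element is at least y.\<close>
lemma reduced_output_ge_if_pops_two:
  assumes wf: "well_formed s" and red: "reduced s"
    and pops_y: "pops s j y" and pops_z: "pops s j z" and "y \<noteq> z"
  obtains e where "e \<in> set (output_at s j)" and "y \<le> e"
proof -
  obtain b where j: "j < length s" and pop: "s ! j = Pop b"
    using pops_y by (rule pops_PopE)
  have y: "1 \<le> y" "y \<le> pushed s j"
    using pops_bounds[OF wf pops_y] by simp_all
  then obtain j0 where j0: "j = Suc j0"
    by (cases j) simp_all
  have "is_pop (s ! j0)"
    using reduced_pops_two_after_pop[OF wf red _ _ \<open>y \<noteq> z\<close>] pops_y pops_z j0 by simp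
  then have "pushed s j = pushed s j0"
    using pushed_Suc[of j0 s] j j0 by (cases "s ! j0") auto
  define d where "d = push_index s y"
  have y_le: "y \<le> pushed s (Suc d)" and d_less: "pushed s d < y"
    using push_index_bounds[of y s] y pushed_le_size[of s j] unfolding d_def by simp_all
  have "d < j0"
    using push_index_less_iff[of y s j0] y pushed_le_size[of s j] \<open>pushed s j = pushed s j0\<close>
    unfolding d_def by simp
  moreover have "pushed s d < pushed s (Suc d)"
    using d_less y_le by simp
  then obtain a where "s ! d = Push a"
    by (rule push_at_if_pushed_less)
  ultimately obtain g where g: "d \<le> g" "Suc g \<le> j0" "s ! g = Push 1" "s ! Suc g = Pop 1"
    using reduced_unit_push_pop_between[OF red, of d j0] j j0 \<open>is_pop (s ! j0)\<close> by auto
  have "pops s (Suc g) (pushed s (Suc g))"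
    using pops_unit_push_pop[OF wf _ g(3,4)] g(2) j j0 by simp
  then have "pushed s (Suc g) \<in> set (output_at s j)"
    using pops_in_output_iff g(2) j0 by simp
  moreover have "y \<le> pushed s (Suc g)"
    using y_le pushed_mono[of "Suc d" "Suc g" s] g(1) by simp
  ultimately show ?thesis
    using that by blast
qed

locale common_block =
  fixes s t :: "op list" and i i' x j j' :: nat
  assumes wf_s: "well_formed s" and wf_t: "well_formed t"
    and same_size: "seq_size s = seq_size t" and same_perm: "result_perm s = result_perm t"
    and pushed_eq: "pushed s i = pushed t i'" and pushed_Suc_eq: "pushed s (Suc i) = pushed t (Suc i')"
    and popped_eq: "popped s i = popped t i'"
    and x_in_block: "pushed s i < x" "x \<le> pushed s (Suc i)"
    and pops_s: "pops s j x" and pops_t: "pops t j' x"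
begin

lemma swap: "common_block t s i' i x j' j"
  using wf_s wf_t same_size same_perm pushed_eq pushed_Suc_eq popped_eq x_in_block pops_s pops_t
  by unfold_locales simp_all

lemma output_eq: "popped s k = popped t k' \<Longrightarrow> output_at s k = output_at t k'"
  by (rule output_at_eq_if_popped_eq[OF wf_s wf_t same_perm same_size])

lemma above_x_iff:
  assumes "1 \<le> y" and "y \<le> seq_size s"
  shows "above s y x \<longleftrightarrow> above t y x" and "above s x y \<longleftrightarrow> above t x y"
  using above_block_iff[OF x_in_block assms] above_block_iff[of t i' x y] x_in_block assms
    pushed_eq pushed_Suc_eq same_size by simp_all

lemma push_before_pop: "i < j"
  using pops_bounds(2)[OF wf_s pops_s] x_in_block pushed_mono[of j i s] by (cases "i < j") auto

lemma x_position:
  obtains p where "p < seq_size s" and "result_perm s ! p = x"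
  using pops_bounds[OF wf_s pops_s] pushed_le_size[of s j] set_result_perm[OF wf_s]
    length_result_perm[OF wf_s] by (metis atLeastAtMost_iff in_set_conv_nth le_trans)

lemma popped_before_le: "popped t j' \<le> popped s j"
proof (rule ccontr)
  assume less: "\<not> popped t j' \<le> popped s j"
  let ?n = "seq_size s" and ?\<pi> = "result_perm s"
  obtain p where p: "p < ?n" "?\<pi> ! p = x"
    by (rule x_position)
  define m where "m = ?n - popped t j'"
  define w where "w = ?\<pi> ! m"
  have p_range: "?n - popped s (Suc j) \<le> p" "p < m"
    using pops_nth_iff[OF wf_s p(1), of j] pops_nth_iff[OF wf_t, of p j'] pops_s pops_t p
      same_size same_perm unfolding m_def by auto
  have m: "m < ?n" "m < ?n - popped s j"
    using less popped_le_size[OF wf_t, of j'] same_size unfolding m_def by auto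
  have pops_w: "pops s j w"
    using pops_nth_iff[OF wf_s m(1), of j] pops_s p_range m unfolding w_def pops_def by auto
  have "above s x w"
    using above_if_pops_nth_less[OF wf_s _ _ \<open>p < m\<close> m(1)] pops_s pops_w p(2)
    unfolding w_def by simp
  then have above_t: "above t x w"
    using above_x_iff(2) pops_bounds[OF wf_s pops_w] pushed_le_size[of s j] by simp
  have "w \<in> set (output_at t j')"
    using nth_result_perm_in_output_iff[OF wf_t, of m j'] m same_size same_perm
    unfolding w_def m_def by simp
  then obtain k where "k < j'" and pops_w_t: "pops t k w"
    using pops_before_if_in_output by blast
  have "w \<notin> set (output_at t i')"
    using pops_in_output_iff[OF pops_w, of i] push_before_pop output_eq[OF popped_eq] by simp
  then have "i' \<le> k"
    using pops_in_output_iff[OF pops_w_t, of i'] by simp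
  moreover have "k \<noteq> i'"
    using pushed_Suc_if_pops[OF pops_w_t] x_in_block pushed_eq pushed_Suc_eq by auto
  ultimately have "x \<le> pushed t k"
    using x_in_block pushed_Suc_eq pushed_mono[of "Suc i'" k t] by simp
  then have "x \<in> set (work_at t k)"
    using mem_work_at_before_pop[OF wf_t pops_t] \<open>k < j'\<close> by simp
  then have "pops t k x"
    using pops_if_above[OF wf_t pops_w_t _ above_t] by simp
  with \<open>k < j'\<close> show False
    using pops_unique[OF pops_t] by blast
qed

lemma popped_after_le:
  assumes red: "reduced s" and before: "popped s j = popped t j'"
  shows "popped s (Suc j) \<le> popped t (Suc j')"
proof (rule ccontr)
  assume less: "\<not> popped s (Suc j) \<le> popped t (Suc j')"
  let ?n = "seq_size s" and ?\<pi> = "result_perm s"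
  obtain p where p: "p < ?n" "?\<pi> ! p = x"
    by (rule x_position)
  define m where "m = ?n - popped t (Suc j') - 1"
  define y where "y = ?\<pi> ! m"
  have p_range: "?n - popped t (Suc j') \<le> p" "p < ?n - popped s j"
    using pops_nth_iff[OF wf_t, of p j'] pops_t p same_size same_perm before by auto
  have m: "?n - popped s (Suc j) \<le> m" "m < ?n - popped t (Suc j')"
    using less popped_le_size[OF wf_s, of "Suc j"] unfolding m_def by auto
  have pops_y: "pops s j y"
    using pops_nth_iff[OF wf_s, of m j] pops_s p_range m unfolding y_def pops_def by auto
  have "y \<noteq> x"
    using nth_eq_iff_index_eq[OF distinct_result_perm[OF wf_s], of m p] p p_range m
    unfolding y_def length_result_perm[OF wf_s] by simp
  have "above s y x"
    using above_if_pops_nth_less[OF wf_s _ _ _ p(1)] pops_s pops_y p(2) p_range m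
    unfolding y_def by simp
  then have above_t: "above t y x"
    using above_x_iff(1) pops_bounds[OF wf_s pops_y] pushed_le_size[of s j] by simp
  have out_eq: "output_at s j = output_at t j'"
    by (rule output_eq[OF before])
  have "pushed t j' < y"
  proof (rule ccontr)
    assume "\<not> pushed t j' < y"
    then have "y \<in> set (work_at t j')"
      using mem_work_at_iff[OF wf_t] pops_bounds(1)[OF wf_s pops_y] pops_y out_eq
      unfolding pops_def by simp
    then have "pops t j' y"
      using pops_if_above[OF wf_t pops_t _ above_t] by simp
    then show False
      using pops_nth_iff[OF wf_t, of m j'] m same_size same_perm p(1) p_range
      unfolding y_def by simp
  qed
  \<comment> \<open>so everything s outputs before pop j is smaller than y, which reducedness forbids\<close>
  moreover obtain e where "e \<in> set (output_at s j)" and "y \<le> e"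
    using reduced_output_ge_if_pops_two[OF wf_s red pops_y pops_s \<open>y \<noteq> x\<close>] .
  ultimately show False
    using output_at_bounds(2)[OF wf_t, of e j'] out_eq by simp
qed

lemma pushed_before_le:
  assumes before: "popped s j = popped t j'" and after: "popped s (Suc j) = popped t (Suc j')"
  shows "pushed t j' \<le> pushed s j"
proof (rule ccontr)
  assume less: "\<not> pushed t j' \<le> pushed s j"
  define e where "e = pushed t j'"
  have "e \<notin> set (output_at t j')"
    using output_at_bounds(2)[OF wf_s, of e j] output_eq[OF before] less unfolding e_def by auto
  then have "e \<in> set (work_at t j')"
    using mem_work_at_iff[OF wf_t] less unfolding e_def by simp
  moreover have "pushed t (Suc i') < e"
    using pushed_mono[of "Suc i" j s] push_before_pop pushed_Suc_eq less unfolding e_def by simp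
  then have "above t e x"
    using above_block_iff(1)[of t i' x e] x_in_block pushed_eq pushed_Suc_eq less
      pushed_le_size[of t j'] unfolding e_def by simp
  ultimately have "pops t j' e"
    using pops_if_above[OF wf_t pops_t] by simp
  then have "e \<in> set (output_at s (Suc j))"
    using output_eq[OF after] unfolding pops_def by simp
  then show False
    using output_at_bounds(2)[OF wf_s] pushed_Suc_if_pops[OF pops_s] less unfolding e_def
    by fastforce
qed

lemma pop_vertices_eq:
  assumes "reduced s" and "reduced t"
  shows "vertex s j = vertex t j'" and "vertex s (Suc j) = vertex t (Suc j')"
proof -
  interpret swapped: common_block t s i' i x j' j
    by (rule swap)
  have before: "popped s j = popped t j'"
    using popped_before_le swapped.popped_before_le by simp
  have after: "popped s (Suc j) = popped t (Suc j')"
    using popped_after_le[OF assms(1) before] swapped.popped_after_le[OF assms(2) before[symmetric]]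
    by simp
  have "pushed s j = pushed t j'"
    using pushed_before_le[OF before after]
      swapped.pushed_before_le[OF before[symmetric] after[symmetric]] by simp
  then show "vertex s j = vertex t j'" and "vertex s (Suc j) = vertex t (Suc j')"
    using before after pushed_Suc_if_pops[OF pops_s] pushed_Suc_if_pops[OF pops_t]
    by (simp_all add: vertex_eq_iff)
qed

end

lemma support_Push:
  assumes wf: "well_formed s" and i: "i < length s" and push: "s ! i = Push a"
  shows "support s i = {pushed s i<..pushed s (Suc i)}"
proof -
  have P: "pushed s (Suc i) = pushed s i + a"
    using pushed_Suc[OF i] push by simp
  then have "take a (input_at s i) = [Suc (pushed s i)..<Suc (pushed s i) + a]"
    using input_at_eq[OF wf, of i] pushed_le_size[of s "Suc i"] by (simp del: upt_Suc)
  with P push show ?thesis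
    unfolding support_def config_at_eq by auto
qed

lemma support_Pop:
  assumes wf: "well_formed s" and j: "j < length s" and pop: "s ! j = Pop b"
  shows "support s j = {e. pops s j e}"
  unfolding support_def config_at_eq using pop pops_Pop_iff[OF wf j pop] by auto

theorem mainTheorem11:
  fixes \<alpha> :: "op list" and i j :: nat
  assumes "well_formed \<alpha>" and "reduced \<alpha>"
    and "i < length \<alpha>" and "is_push (\<alpha> ! i)" and "fixed_op \<alpha> i"
    and "j < length \<alpha>" and "is_pop (\<alpha> ! j)" and "corresponds \<alpha> i j"
  shows "fixed_op \<alpha> j"
proof -
  obtain a where push: "\<alpha> ! i = Push a"
    using \<open>is_push (\<alpha> ! i)\<close> by (cases "\<alpha> ! i") auto
  obtain b where pop: "\<alpha> ! j = Pop b"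
    using \<open>is_pop (\<alpha> ! j)\<close> by (cases "\<alpha> ! j") auto
  obtain x where "x \<in> support \<alpha> i" and "x \<in> support \<alpha> j"
    using \<open>corresponds \<alpha> i j\<close> unfolding corresponds_def by auto
  then have x_in_block: "pushed \<alpha> i < x" "x \<le> pushed \<alpha> (Suc i)" and "pops \<alpha> j x"
    using support_Push[OF assms(1,3) push] support_Pop[OF assms(1,6) pop] by auto
  show ?thesis
    unfolding fixed_op_def
  proof (intro allI impI)
    fix \<beta> assume "reduced \<beta>" and equiv: "equivalent \<alpha> \<beta>"
    then obtain i' where edge: "vertex \<beta> i' = vertex \<alpha> i" "vertex \<beta> (Suc i') = vertex \<alpha> (Suc i)"
      using \<open>fixed_op \<alpha> i\<close> unfolding fixed_op_def by blast
    have wf: "well_formed \<beta>" and size: "seq_size \<alpha> = seq_size \<beta>"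
      and perm: "result_perm \<alpha> = result_perm \<beta>"
      using equiv unfolding equivalent_def by simp_all
    have "1 \<le> x" and "x \<le> seq_size \<beta>"
      using x_in_block pushed_le_size[of \<alpha> "Suc i"] size by simp_all
    then obtain j' where "pops \<beta> j' x"
      by (rule pops_exists[OF wf])
    then interpret common_block \<alpha> \<beta> i i' x j j'
      using assms(1) wf size perm edge x_in_block \<open>pops \<alpha> j x\<close>
      by unfold_locales (simp_all add: vertex_eq_iff)
    show "\<exists>j' < length \<beta>. vertex \<beta> j' = vertex \<alpha> j \<and> vertex \<beta> (Suc j') = vertex \<alpha> (Suc j)"
      using pop_vertices_eq[OF \<open>reduced \<alpha>\<close> \<open>reduced \<beta>\<close>] \<open>pops \<beta> j' x\<close>
      unfolding pops_def by auto
  qed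
qed

end
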